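(* Let $p$ be a prime with $p\equiv -1\pmod 6$. Then for all integers $\alpha\ge1$ and $n\ge0$, \[ b_{8}\!\left(p^{2\alpha}n+\frac{(24i+7p)p^{2\alpha-1}-7}{24}\right)\equiv 0 \pmod 2 \] for each $i=1,\ldots,p-1$.
   Context: For a positive integer $\ell$, $b_\ell(n)$ denotes the number of partitions of $n$ having no part divisible by $\ell$. *)

theory Defs
  imports Main "HOL-Library.Multiset" "HOL-Computational_Algebra.Primes"
begin

definition b :: "nat \<Rightarrow> nat \<Rightarrow> nat" where
  "b l n = card {M :: nat multiset. (\<forall>x\<in>#M. 0 < x \<and> \<not> l dvd x) \<and> sum_mset M = n}"

end

(*
  Modulo 2 the generating function of b_8 is prod (1 - q^(8n)) / (1 - q^n), and since
  (1 - q^n)^(-1) = (1 + q^n)^(-1) and (1 + q^n)^8 = 1 + q^(8n) over GF(2), it equals E^7 = E^3 E^4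
  with E = prod (1 + q^n).  A combinatorial Jacobi triple product over GF(2) (sets of
  "particles" and "holes" graded by charge) gives E = sum q^(k(3k+1)/2) and
  E^3 = sum q^(k(2k-1)), both over k in Z.  Hence b_8(m) is even unless
  m = k(2k-1) + 2l(3l+1), i.e. unless 24m + 7 = 3X^2 + 4Y^2 with X = 4k - 1, Y = 6l + 1.
  For the m of the theorem, 24m + 7 = p^(2 alpha - 1) Q with p not dividing Q.  Since -3 is a
  non-residue modulo p = 5 (mod 6), p divides 3X^2 + 4Y^2 only if it divides X and Y, so the
  exponent of p in 3X^2 + 4Y^2 is even: a contradiction.
*)

theory Submission
  imports Defs "HOL-Library.Z2" "HOL-Computational_Algebra.Formal_Power_Series"
    "HOL-Number_Theory.Number_Theory"
begin

unbundle fps_syntax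

section \<open>Generating functions of weighted sets\<close>

definition finite_fibres :: "'a set \<Rightarrow> ('a \<Rightarrow> nat) \<Rightarrow> bool" where
  "finite_fibres X f \<longleftrightarrow> (\<forall>n. finite {x\<in>X. f x = n})"

definition gf :: "'a set \<Rightarrow> ('a \<Rightarrow> nat) \<Rightarrow> 'b::comm_semiring_1 fps" where
  "gf X f = Abs_fps (\<lambda>n. of_nat (card {x\<in>X. f x = n}))"

lemma gf_nth: "gf X f $ n = of_nat (card {x\<in>X. f x = n})"
  by (simp add: gf_def)

lemma finite_fibres_Times:
  assumes "finite_fibres X f" "finite_fibres Y g"
  shows "finite_fibres (X \<times> Y) (\<lambda>(x, y). f x + g y)"
  unfolding finite_fibres_def
proof
  fix n
  have "{p \<in> X \<times> Y. (\<lambda>(x, y). f x + g y) p = n}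
      \<subseteq> (\<Union>i\<le>n. {x\<in>X. f x = i} \<times> {y\<in>Y. g y = n - i})"
    by auto
  moreover have "finite (\<Union>i\<le>n. {x\<in>X. f x = i} \<times> {y\<in>Y. g y = n - i})"
    using assms unfolding finite_fibres_def by auto
  ultimately show "finite {p \<in> X \<times> Y. (\<lambda>(x, y). f x + g y) p = n}"
    by (rule finite_subset)
qed

lemma gf_Times:
  assumes "finite_fibres X f" "finite_fibres Y g"
  shows "gf X f * gf Y g = gf (X \<times> Y) (\<lambda>(x, y). f x + g y)"
proof (rule fps_ext)
  fix n
  let ?A = "\<lambda>i. {x\<in>X. f x = i}" and ?B = "\<lambda>i. {y\<in>Y. g y = i}"
  have "(gf X f * gf Y g) $ n = of_nat (\<Sum>i=0..n. card (?A i \<times> ?B (n - i)))"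
    by (simp add: fps_mult_nth gf_nth card_cartesian_product)
  also have "(\<Sum>i=0..n. card (?A i \<times> ?B (n - i))) = card (\<Union>i\<in>{0..n}. ?A i \<times> ?B (n - i))"
    using assms unfolding finite_fibres_def by (intro card_UN_disjoint[symmetric]) auto
  also have "(\<Union>i\<in>{0..n}. ?A i \<times> ?B (n - i)) = {p \<in> X \<times> Y. (\<lambda>(x, y). f x + g y) p = n}"
    by auto
  finally show "(gf X f * gf Y g) $ n = gf (X \<times> Y) (\<lambda>(x, y). f x + g y) $ n"
    by (simp add: gf_nth)
qed

lemma gf_bij_betw:
  assumes "bij_betw h X Y" "\<And>x. x \<in> X \<Longrightarrow> g (h x) = f x"
  shows "gf X f = gf Y g"
proof (rule fps_ext)
  fix n
  have "bij_betw h {x\<in>X. f x = n} {y\<in>Y. g y = n}"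
    using assms unfolding bij_betw_def inj_on_def by (auto simp: image_iff)
  then show "gf X f $ n = gf Y g $ n"
    by (simp add: gf_nth bij_betw_same_card)
qed

lemma finite_fibres_mult:
  assumes "finite_fibres X f" "c > 0"
  shows "finite_fibres X (\<lambda>x. c * f x)"
  unfolding finite_fibres_def
proof
  fix n
  have "{x\<in>X. c * f x = n} \<subseteq> {x\<in>X. f x = n div c}"
    using assms(2) by auto
  then show "finite {x\<in>X. c * f x = n}"
    using assms(1) unfolding finite_fibres_def by (meson finite_subset)
qed

lemma finite_fibres_subset:
  assumes "X \<subseteq> Y" "finite_fibres Y f"
  shows "finite_fibres X f"
  unfolding finite_fibres_def
proof
  fix n
  have "{x\<in>X. f x = n} \<subseteq> {y\<in>Y. f y = n}" using assms(1) by auto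
  then show "finite {x\<in>X. f x = n}"
    using assms(2) unfolding finite_fibres_def by (blast intro: finite_subset)
qed

lemma gf_mult_nth:
  assumes "c > 0"
  shows "gf X (\<lambda>x. c * f x) $ n = (if c dvd n then gf X f $ (n div c) else 0)"
proof -
  have "{x\<in>X. c * f x = n} = (if c dvd n then {x\<in>X. f x = n div c} else {})"
    using assms by auto
  then show ?thesis by (simp add: gf_nth)
qed

lemma gf_mult_eq_iff:
  assumes "c > 0"
  shows "(gf X (\<lambda>x. c * f x) :: 'b::comm_semiring_1 fps) = gf Y (\<lambda>y. c * g y) \<longleftrightarrow>
    (gf X f :: 'b fps) = gf Y g"
proof
  assume "gf X (\<lambda>x. c * f x) = (gf Y (\<lambda>y. c * g y) :: 'b fps)"
  then have "gf X (\<lambda>x. c * f x) $ (c * n) = (gf Y (\<lambda>y. c * g y) :: 'b fps) $ (c * n)" for n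
    by simp
  then show "gf X f = (gf Y g :: 'b fps)"
    using assms by (intro fps_ext) (simp add: gf_mult_nth)
qed (intro fps_ext, simp add: gf_mult_nth assms)

lemma gf_unit: "gf {()} (\<lambda>_. 0) = 1"
  by (rule fps_ext) (simp add: gf_nth)

lemma of_nat_bit: "(of_nat n :: bit) = (if even n then 0 else 1)"
  by (induction n) auto

lemma of_nat_bit_eq_iff: "(of_nat m :: bit) = of_nat n \<longleftrightarrow> (even m \<longleftrightarrow> even n)"
  by (simp add: of_nat_bit)

lemma bit_gf_eq_iff:
  "(gf X f :: bit fps) = gf Y g \<longleftrightarrow>
    (\<forall>n. even (card {x\<in>X. f x = n}) \<longleftrightarrow> even (card {y\<in>Y. g y = n}))"
  by (simp add: fps_eq_iff gf_nth of_nat_bit_eq_iff)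

lemma even_card_iff_even_card_fixpoints:
  assumes "finite X" "\<And>x. x \<in> X \<Longrightarrow> \<sigma> x \<in> X" "\<And>x. x \<in> X \<Longrightarrow> \<sigma> (\<sigma> x) = x"
  shows "even (card X) \<longleftrightarrow> even (card {x\<in>X. \<sigma> x = x})"
  using assms
proof (induction "card X" arbitrary: X rule: less_induct)
  case less
  show ?case
  proof (cases "\<forall>x\<in>X. \<sigma> x = x")
    case True
    then have "{x\<in>X. \<sigma> x = x} = X" by auto
    then show ?thesis by simp
  next
    case False
    then obtain x where x: "x \<in> X" "\<sigma> x \<noteq> x" by auto
    let ?X' = "X - {x, \<sigma> x}"
    have orbit: "{x, \<sigma> x} \<subseteq> X" "card {x, \<sigma> x} = 2"
      using x less.prems(2) by auto
    then have card_X: "card X = card ?X' + 2"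
      using card_Diff_subset[OF _ orbit(1)] card_mono[OF less.prems(1) orbit(1)] by auto
    have "\<sigma> y \<in> ?X'" if "y \<in> ?X'" for y
    proof -
      have y: "y \<in> X" "y \<noteq> x" "y \<noteq> \<sigma> x" using that by auto
      then have "\<sigma> y \<noteq> x" "\<sigma> y \<noteq> \<sigma> x"
        using less.prems(3) x(1) by (metis, metis)
      then show ?thesis using less.prems(2) y(1) by simp
    qed
    moreover have "\<sigma> (\<sigma> y) = y" if "y \<in> ?X'" for y
      using that less.prems(3) by simp
    ultimately have "even (card ?X') \<longleftrightarrow> even (card {y\<in>?X'. \<sigma> y = y})"
      using less.prems(1) card_X by (intro less.hyps) auto
    moreover have "{y\<in>?X'. \<sigma> y = y} = {y\<in>X. \<sigma> y = y}"
      using x less.prems(3) by auto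
    ultimately show ?thesis using card_X by simp
  qed
qed

lemma bit_gf_square:
  assumes "finite_fibres X f"
  shows "gf X f * gf X f = (gf X (\<lambda>x. 2 * f x) :: bit fps)"
proof -
  have "gf (X \<times> X) (\<lambda>(x, y). f x + f y) = (gf X (\<lambda>x. 2 * f x) :: bit fps)"
    unfolding bit_gf_eq_iff
  proof
    fix n
    let ?F = "{p \<in> X \<times> X. (\<lambda>(x, y). f x + f y) p = n}"
    have "finite ?F"
      using finite_fibres_Times[OF assms assms] unfolding finite_fibres_def by (rule spec)
    then have "even (card ?F) \<longleftrightarrow> even (card {p\<in>?F. prod.swap p = p})"
      by (rule even_card_iff_even_card_fixpoints) (auto simp: add.commute)
    also have "{p\<in>?F. prod.swap p = p} = (\<lambda>x. (x, x)) ` {x\<in>X. 2 * f x = n}"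
    proof (intro equalityI subsetI)
      fix p assume p: "p \<in> {p\<in>?F. prod.swap p = p}"
      obtain a b where ab: "p = (a, b)" by (cases p)
      have "prod.swap (a, b) = (a, b)" "(a, b) \<in> X \<times> X" "f a + f b = n"
        using p unfolding ab by (simp_all only: mem_Collect_eq prod.case)
      then have "b = a" "a \<in> X" by (metis prod.inject swap_simp, blast)
      with \<open>f a + f b = n\<close> show "p \<in> (\<lambda>x. (x, x)) ` {x\<in>X. 2 * f x = n}"
        unfolding ab by (auto simp: mult_2)
    next
      fix p assume "p \<in> (\<lambda>x. (x, x)) ` {x\<in>X. 2 * f x = n}"
      then obtain x where "p = (x, x)" "x \<in> X" "2 * f x = n" by blast
      then show "p \<in> {p\<in>?F. prod.swap p = p}" by (simp add: mult_2)
    qed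
    also have "card \<dots> = card {x\<in>X. 2 * f x = n}"
      by (rule card_image) (simp add: inj_on_def)
    finally show "even (card ?F) \<longleftrightarrow> even (card {x\<in>X. 2 * f x = n})" .
  qed
  then show ?thesis by (simp add: gf_Times[OF assms assms])
qed

section \<open>Partitions modulo 2\<close>

definition distinct_gf :: "nat set \<Rightarrow> bit fps" where
  "distinct_gf I = gf (Fpow I) (\<lambda>S. \<Sum>S)"

definition partition_gf :: "nat set \<Rightarrow> bit fps" where
  "partition_gf I = gf {M. set_mset M \<subseteq> I} sum_mset"

lemma finite_fibres_Fpow: "finite_fibres (Fpow I) (\<lambda>S. \<Sum>S)"
  unfolding finite_fibres_def
proof
  fix n
  have "{S \<in> Fpow I. \<Sum>S = n} \<subseteq> Pow {..n}"
    using member_le_sum by (fastforce simp: Fpow_def)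
  then show "finite {S \<in> Fpow I. \<Sum>S = n}"
    by (rule finite_subset) simp
qed

lemma finite_fibres_multisets:
  assumes "0 \<notin> I"
  shows "finite_fibres {M. set_mset M \<subseteq> I} sum_mset"
  unfolding finite_fibres_def
proof
  fix n
  have "{M \<in> {M. set_mset M \<subseteq> I}. sum_mset M = n} \<subseteq> mset ` {xs. set xs \<subseteq> {..n} \<and> length xs \<le> n}"
  proof
    fix M assume M: "M \<in> {M \<in> {M. set_mset M \<subseteq> I}. sum_mset M = n}"
    obtain xs where xs: "mset xs = M" using ex_mset by blast
    have "size M \<le> sum_mset M" if "0 \<notin># M" for M :: "nat multiset"
      using that by (induction M) auto
    then have "size M \<le> n" using M assms by auto
    moreover have "x \<le> n" if "x \<in> set xs" for x
      using that M xs sum_mset.remove[of x M] by auto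
    ultimately show "M \<in> mset ` {xs. set xs \<subseteq> {..n} \<and> length xs \<le> n}"
      using xs by auto
  qed
  then show "finite {M \<in> {M. set_mset M \<subseteq> I}. sum_mset M = n}"
    by (rule finite_subset) (simp add: finite_lists_length_le)
qed

lemma bij_betw_image_Fpow:
  assumes "bij_betw f A B"
  shows "bij_betw (image f) (Fpow A) (Fpow B)"
proof -
  have inj: "inj_on f A" using assms by (rule bij_betw_imp_inj_on)
  have "Fpow B \<subseteq> image f ` Fpow A"
  proof
    fix T assume T: "T \<in> Fpow B"
    then obtain S where S: "S \<subseteq> A" "T = f ` S"
      using assms by (auto simp: Fpow_def bij_betw_def subset_image_iff)
    then have "finite S" using T inj by (auto simp: Fpow_def finite_image_iff inj_on_subset)
    then show "T \<in> image f ` Fpow A" using S by (auto simp: Fpow_def)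
  qed
  moreover have "image f ` Fpow A \<subseteq> Fpow B"
    using assms by (auto simp: Fpow_def bij_betw_def)
  ultimately show ?thesis
    using inj_on_image_Fpow[OF inj] by (simp add: bij_betw_def)
qed

lemma distinct_gf_Un:
  assumes "I \<inter> J = {}"
  shows "distinct_gf (I \<union> J) = distinct_gf I * distinct_gf J"
proof -
  have "distinct_gf I * distinct_gf J = gf (Fpow I \<times> Fpow J) (\<lambda>(S, T). \<Sum>S + \<Sum>T)"
    unfolding distinct_gf_def by (rule gf_Times[OF finite_fibres_Fpow finite_fibres_Fpow])
  also have "\<dots> = distinct_gf (I \<union> J)"
    unfolding distinct_gf_def
  proof (rule gf_bij_betw)
    show "bij_betw (\<lambda>(S, T). S \<union> T) (Fpow I \<times> Fpow J) (Fpow (I \<union> J))"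
      by (rule bij_betw_byWitness[where f' = "\<lambda>S. (S \<inter> I, S \<inter> J)"])
        (use assms in \<open>auto simp: Fpow_def\<close>)
    show "\<Sum>((\<lambda>(S, T). S \<union> T) p) = (\<lambda>(S, T). \<Sum>S + \<Sum>T) p" if "p \<in> Fpow I \<times> Fpow J" for p
      using that assms by (auto simp: Fpow_def intro!: sum.union_disjoint)
  qed
  finally show ?thesis by simp
qed

lemma distinct_gf_image_mult:
  assumes "c > 0"
  shows "distinct_gf ((*) c ` I) = gf (Fpow I) (\<lambda>S. c * \<Sum>S)"
  unfolding distinct_gf_def
proof (rule sym, rule gf_bij_betw)
  have inj: "inj ((*) c)" using assms by (auto intro: injI)
  then show "bij_betw (image ((*) c)) (Fpow I) (Fpow ((*) c ` I))"
    by (intro bij_betw_image_Fpow) (simp add: bij_betw_def inj_on_subset[OF inj])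
  show "\<Sum>((*) c ` S) = c * \<Sum>S" if "S \<in> Fpow I" for S
    using inj by (simp add: sum.reindex inj_on_subset sum_distrib_left)
qed

lemma distinct_gf_square: "distinct_gf I * distinct_gf I = distinct_gf ((*) 2 ` I)"
  unfolding distinct_gf_image_mult[of 2, simplified]
  unfolding distinct_gf_def by (rule bit_gf_square[OF finite_fibres_Fpow])

lemma distinct_gf_power_two_pow: "distinct_gf I ^ 2 ^ j = distinct_gf ((*) (2 ^ j) ` I)"
proof (induction j)
  case 0
  show ?case by simp
next
  case (Suc j)
  have "distinct_gf I ^ 2 ^ Suc j = (distinct_gf I ^ 2 ^ j) ^ 2"
    by (simp add: power_mult[symmetric] mult.commute)
  also have "\<dots> = distinct_gf I ^ 2 ^ j * distinct_gf I ^ 2 ^ j"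
    by (rule power2_eq_square)
  also have "\<dots> = distinct_gf ((*) 2 ` (*) (2 ^ j) ` I)"
    by (simp only: Suc.IH distinct_gf_square)
  also have "(*) 2 ` (*) (2 ^ j) ` I = (*) (2 ^ Suc j) ` I"
    by (simp add: image_image mult.assoc)
  finally show ?case .
qed

lemma distinct_gf_nth_0:
  assumes "0 \<notin> I"
  shows "distinct_gf I $ 0 = 1"
proof -
  have "{S \<in> Fpow I. \<Sum>S = 0} = {{}}"
    using assms by (fastforce simp: Fpow_def)
  then show ?thesis by (simp add: distinct_gf_def gf_nth)
qed

lemma distinct_gf_nonzero: "0 \<notin> I \<Longrightarrow> distinct_gf I \<noteq> 0"
  using distinct_gf_nth_0 by force

definition parts_of :: "nat multiset \<times> nat set \<Rightarrow> nat set" where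
  "parts_of P = set_mset (fst P) \<union> snd P"

definition toggle :: "nat \<Rightarrow> nat multiset \<times> nat set \<Rightarrow> nat multiset \<times> nat set" where
  "toggle x P = (if x \<in> snd P then (add_mset x (fst P), snd P - {x})
                 else (fst P - {#x#}, insert x (snd P)))"

lemma parts_of_toggle:
  assumes "x \<in> parts_of (M, S)"
  shows "parts_of (toggle x (M, S)) = parts_of (M, S)"
proof (cases "x \<in> S")
  case True
  then show ?thesis by (auto simp: toggle_def parts_of_def)
next
  case False
  then have "x \<in># M" using assms by (simp add: parts_of_def)
  then have "set_mset M = insert x (set_mset (M - {#x#}))"
    by (metis insert_DiffM set_mset_add_mset_insert)
  with False show ?thesis by (auto simp: toggle_def parts_of_def)
qed

lemma toggle_toggle:
  assumes "x \<in> parts_of (M, S)"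
  shows "toggle x (toggle x (M, S)) = (M, S)"
  using assms by (cases "x \<in> S") (auto simp: toggle_def parts_of_def insert_absorb)

lemma toggle_neq: "toggle x (M, S) \<noteq> (M, S)"
  by (auto simp: toggle_def)

lemma toggle_in_fibre:
  assumes "x \<in> parts_of (M, S)" "set_mset M \<subseteq> I" "S \<in> Fpow I"
  shows "toggle x (M, S) \<in> {M. set_mset M \<subseteq> I} \<times> Fpow I"
    and "sum_mset (fst (toggle x (M, S))) + \<Sum>(snd (toggle x (M, S))) = sum_mset M + \<Sum>S"
proof -
  have "finite S" using assms(3) by (simp add: Fpow_def)
  show "toggle x (M, S) \<in> {M. set_mset M \<subseteq> I} \<times> Fpow I"
    using parts_of_toggle[OF assms(1)] assms \<open>finite S\<close>
    by (cases "x \<in> S") (auto simp: toggle_def parts_of_def Fpow_def)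
  show "sum_mset (fst (toggle x (M, S))) + \<Sum>(snd (toggle x (M, S))) = sum_mset M + \<Sum>S"
  proof (cases "x \<in> S")
    case True
    then show ?thesis using sum.remove[OF \<open>finite S\<close> True, of id] by (simp add: toggle_def)
  next
    case False
    then have "x \<in># M" using assms(1) by (simp add: parts_of_def)
    then show ?thesis using False \<open>finite S\<close> by (simp add: toggle_def sum_mset.remove)
  qed
qed

(* Moving the least part between the multiset and the set is a fixpoint-free involution. *)
lemma even_card_mixed_fibre:
  fixes I :: "nat set" and n :: nat
  defines "F \<equiv> {P \<in> {M. set_mset M \<subseteq> I} \<times> Fpow I. (\<lambda>(M, S). sum_mset M + \<Sum>S) P = n}"
  assumes "n > 0" "finite F"
  shows "even (card F)"
proof -
  define \<sigma> where "\<sigma> P = toggle (Min (parts_of P)) P" for P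
  have min_parts: "Min (parts_of P) \<in> parts_of P" if "P \<in> F" for P
  proof -
    obtain M S where P: "P = (M, S)" by (cases P)
    have "finite S" "sum_mset M + \<Sum>S = n" using that by (auto simp: P F_def Fpow_def)
    then have "finite (parts_of P)" "parts_of P \<noteq> {}"
      using assms(2) by (auto simp: P parts_of_def)
    then show ?thesis by (rule Min_in)
  qed
  have "\<sigma> P \<in> F" "\<sigma> (\<sigma> P) = P" "\<sigma> P \<noteq> P" if "P \<in> F" for P
  proof -
    obtain M S where P: "P = (M, S)" by (cases P)
    have x: "Min (parts_of (M, S)) \<in> parts_of (M, S)" using min_parts that by (simp add: P)
    have MS: "set_mset M \<subseteq> I" "S \<in> Fpow I" using that by (auto simp: P F_def)
    show "\<sigma> P \<in> F" using toggle_in_fibre[OF x MS] that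
      by (auto simp: P F_def \<sigma>_def split: prod.splits)
    show "\<sigma> (\<sigma> P) = P"
      using toggle_toggle[OF x] parts_of_toggle[OF x] by (simp add: P \<sigma>_def)
    show "\<sigma> P \<noteq> P" using toggle_neq by (simp add: P \<sigma>_def)
  qed
  then have "even (card F) \<longleftrightarrow> even (card {P\<in>F. \<sigma> P = P})"
    using assms(3) by (intro even_card_iff_even_card_fixpoints) auto
  also have "{P\<in>F. \<sigma> P = P} = {}"
    using \<open>\<And>P. P \<in> F \<Longrightarrow> \<sigma> P \<noteq> P\<close> by blast
  finally show ?thesis by simp
qed

lemma mixed_fibre_0:
  fixes I :: "nat set"
  assumes "0 \<notin> I"
  shows "{P \<in> {M. set_mset M \<subseteq> I} \<times> Fpow I. (\<lambda>(M, S). sum_mset M + \<Sum>S) P = 0} = {({#}, {})}"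
proof
  show "{({#}, {})} \<subseteq> {P \<in> {M. set_mset M \<subseteq> I} \<times> Fpow I. (\<lambda>(M, S). sum_mset M + \<Sum>S) P = 0}"
    by (simp add: Fpow_def)
  show "{P \<in> {M. set_mset M \<subseteq> I} \<times> Fpow I. (\<lambda>(M, S). sum_mset M + \<Sum>S) P = 0} \<subseteq> {({#}, {})}"
  proof
    fix P assume P: "P \<in> {P \<in> {M. set_mset M \<subseteq> I} \<times> Fpow I. (\<lambda>(M, S). sum_mset M + \<Sum>S) P = 0}"
    obtain M S where MS: "P = (M, S)" by (cases P)
    have h: "set_mset M \<subseteq> I" "finite S" "S \<subseteq> I" "sum_mset M + \<Sum>S = 0"
      using P unfolding MS by (auto simp: Fpow_def)
    have "M = {#}"
    proof (rule ccontr)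
      assume "M \<noteq> {#}"
      then obtain x where "x \<in># M" by (meson multiset_nonemptyE)
      then have "x \<in> I" "x \<le> sum_mset M" using h(1) sum_mset.remove[of x M] by auto
      then show False using h(4) assms by (cases "x = 0") auto
    qed
    moreover have "S = {}"
    proof (rule equals0I)
      fix x assume "x \<in> S"
      then have "x \<in> I" "x \<le> \<Sum>S" using h(2,3) member_le_sum[of x S id] by auto
      then show False using h(4) assms by (cases "x = 0") auto
    qed
    ultimately show "P \<in> {({#}, {})}" using MS by simp
  qed
qed

lemma partition_gf_mult_distinct_gf:
  assumes "0 \<notin> I"
  shows "partition_gf I * distinct_gf I = 1"
proof -
  let ?X = "{M. set_mset M \<subseteq> I} \<times> Fpow I" and ?w = "\<lambda>(M, S). sum_mset M + \<Sum>S"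
  have fibres: "finite_fibres ?X ?w"
    by (rule finite_fibres_Times[OF finite_fibres_multisets[OF assms] finite_fibres_Fpow])
  have "partition_gf I * distinct_gf I = gf ?X ?w"
    unfolding partition_gf_def distinct_gf_def
    by (rule gf_Times[OF finite_fibres_multisets[OF assms] finite_fibres_Fpow])
  also have "\<dots> = gf {()} (\<lambda>_. 0)"
    unfolding bit_gf_eq_iff
  proof
    fix n
    show "even (card {P \<in> ?X. ?w P = n}) \<longleftrightarrow> even (card {u \<in> {()}. 0 = n})"
    proof (cases "n = 0")
      case True
      then show ?thesis using mixed_fibre_0[OF assms] by simp
    next
      case False
      then show ?thesis
        using even_card_mixed_fibre[of n I] fibres unfolding finite_fibres_def by simp
    qed
  qed
  finally show ?thesis by (simp add: gf_unit)
qed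

section \<open>A Jacobi triple product modulo 2\<close>

(* A state (A, B) records the occupied levels A > 0 and the vacant levels -b <= 0, b in B, of a
   Dirac sea; shift_down lowers every level by one and so decreases the charge |A| - |B| by one. *)

definition fermion_states :: "(nat set \<times> nat set) set" where
  "fermion_states = Fpow {0<..} \<times> Fpow UNIV"

definition charge :: "nat set \<times> nat set \<Rightarrow> int" where
  "charge P = int (card (fst P)) - int (card (snd P))"

definition energy :: "nat set \<times> nat set \<Rightarrow> nat" where
  "energy P = \<Sum>(fst P) + \<Sum>(snd P)"

definition shift_down :: "nat set \<times> nat set \<Rightarrow> nat set \<times> nat set" where
  "shift_down P = ((\<lambda>x. x - 1) ` (fst P - {1}), Suc ` snd P \<union> (if 1 \<in> fst P then {} else {0}))"

definition shift_up :: "nat set \<times> nat set \<Rightarrow> nat set \<times> nat set" where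
  "shift_up P = (Suc ` fst P \<union> (if 0 \<in> snd P then {} else {1}), (\<lambda>x. x - 1) ` (snd P - {0}))"

lemma mem_fermion_states: "(A, B) \<in> fermion_states \<longleftrightarrow> finite A \<and> 0 \<notin> A \<and> finite B"
  by (auto simp: fermion_states_def Fpow_def subset_eq intro: gr0I)

lemma
  fixes A :: "nat set"
  assumes "finite A" "0 \<notin> A"
  shows card_image_pred: "card ((\<lambda>x. x - 1) ` A) = card A"
    and sum_image_pred: "int (\<Sum>((\<lambda>x. x - 1) ` A)) = int (\<Sum>A) - int (card A)"
    and Suc_image_pred: "Suc ` (\<lambda>x. x - 1) ` A = A"
proof -
  have inj: "inj_on (\<lambda>x. x - 1) A"
    using assms(2) by (auto simp: inj_on_def) (metis One_nat_def Suc_pred neq0_conv)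
  show "card ((\<lambda>x. x - 1) ` A) = card A" by (rule card_image[OF inj])
  have pos: "x \<ge> 1" if "x \<in> A" for x using that assms(2) by (cases x) auto
  have "int (\<Sum>((\<lambda>x. x - 1) ` A)) = (\<Sum>x\<in>A. int (x - 1))"
    using sum.reindex[OF inj, of int] by (simp add: of_nat_sum)
  also have "\<dots> = (\<Sum>x\<in>A. int x - 1)"
    using pos by (intro sum.cong) (simp_all add: of_nat_diff)
  finally show "int (\<Sum>((\<lambda>x. x - 1) ` A)) = int (\<Sum>A) - int (card A)"
    by (simp add: sum_subtractf of_nat_sum)
  have "Suc (x - 1) = x" if "x \<in> A" for x using pos[OF that] by simp
  then have "(\<lambda>x. Suc (x - 1)) ` A = (\<lambda>x. x) ` A" by (rule image_cong[OF refl])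
  then show "Suc ` (\<lambda>x. x - 1) ` A = A" by (simp add: image_image)
qed

lemma sum_image_Suc: "finite B \<Longrightarrow> \<Sum>(Suc ` B) = \<Sum>B + card B"
  by (simp add: sum.reindex sum_Suc)

lemma shift_down_props:
  assumes "(A, B) \<in> fermion_states"
  shows "shift_down (A, B) \<in> fermion_states"
    and "charge (shift_down (A, B)) = charge (A, B) - 1"
    and "int (energy (shift_down (A, B))) = int (energy (A, B)) - charge (A, B)"
    and "shift_up (shift_down (A, B)) = (A, B)"
proof -
  have fin: "finite A" "finite B" and A0: "0 \<notin> A" "0 \<notin> A - {1}"
    using assms by (auto simp: mem_fermion_states)
  have "0 \<notin> (\<lambda>x. x - 1) ` (A - {1})"
    using A0 by (auto simp: image_iff) (metis One_nat_def diff_is_0_eq le_neq_implies_less less_one)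
  then show "shift_down (A, B) \<in> fermion_states"
    using fin by (simp add: shift_down_def mem_fermion_states)
  have card: "card (A - {1}) + (if 1 \<in> A then 1 else 0) = card A"
    using fin(1) card_gt_0_iff[of A] by (cases "1 \<in> A") (auto simp: card_Diff_singleton)
  have sum: "\<Sum>(A - {1}) + (if 1 \<in> A then 1 else 0) = \<Sum>A"
    using sum.remove[OF fin(1), of 1 "\<lambda>x. x"] by (cases "1 \<in> A") simp_all
  have "0 \<notin> Suc ` B" by auto
  then have "card (snd (shift_down (A, B))) = card B + (if 1 \<in> A then 0 else 1)"
    using fin(2) by (simp add: shift_down_def card_image)
  moreover have "card (fst (shift_down (A, B))) + (if 1 \<in> A then 1 else 0) = card A"
    using card card_image_pred[OF _ A0(2)] fin(1) by (simp add: shift_down_def del: card_Diff_singleton)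
  ultimately show "charge (shift_down (A, B)) = charge (A, B) - 1"
    by (simp add: charge_def split: if_splits)
  have "int (\<Sum>(fst (shift_down (A, B)))) = int (\<Sum>A) - int (card A)"
    using sum_image_pred[OF _ A0(2)] fin(1) card sum
    by (simp add: shift_down_def del: of_nat_sum card_Diff_singleton split: if_splits)
  moreover have "\<Sum>(snd (shift_down (A, B))) = \<Sum>B + card B"
    using fin(2) by (simp add: shift_down_def sum_image_Suc)
  ultimately show "int (energy (shift_down (A, B))) = int (energy (A, B)) - charge (A, B)"
    by (simp add: energy_def charge_def del: of_nat_sum)
  show "shift_up (shift_down (A, B)) = (A, B)"
    using Suc_image_pred[OF _ A0(2)] fin by (auto simp: shift_down_def shift_up_def image_image)
qed

lemma shift_up_props:
  assumes "(A, B) \<in> fermion_states"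
  shows "shift_up (A, B) \<in> fermion_states"
    and "charge (shift_up (A, B)) = charge (A, B) + 1"
    and "int (energy (shift_up (A, B))) = int (energy (A, B)) + charge (A, B) + 1"
    and "shift_down (shift_up (A, B)) = (A, B)"
proof -
  have fin: "finite A" "finite B" and A0: "0 \<notin> A" and B0: "0 \<notin> B - {0}"
    using assms by (auto simp: mem_fermion_states)
  show "shift_up (A, B) \<in> fermion_states"
    using fin by (simp add: shift_up_def mem_fermion_states)
  have one: "1 \<notin> Suc ` A" using A0 by auto
  have card: "card (B - {0}) + (if 0 \<in> B then 1 else 0) = card B"
    using fin(2) card_gt_0_iff[of B] by (cases "0 \<in> B") (auto simp: card_Diff_singleton)
  have sum: "\<Sum>(B - {0}) = \<Sum>B"
    using sum.remove[OF fin(2), of 0 "\<lambda>x. x"] by (cases "0 \<in> B") simp_all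
  have "card (fst (shift_up (A, B))) = card A + (if 0 \<in> B then 0 else 1)"
    using fin(1) one by (simp add: shift_up_def card_image)
  moreover have "card (snd (shift_up (A, B))) + (if 0 \<in> B then 1 else 0) = card B"
    using card card_image_pred[OF _ B0] fin(2) by (simp add: shift_up_def del: card_Diff_singleton)
  ultimately show "charge (shift_up (A, B)) = charge (A, B) + 1"
    by (simp add: charge_def split: if_splits)
  have "\<Sum>(fst (shift_up (A, B))) = \<Sum>A + card A + (if 0 \<in> B then 0 else 1)"
    using fin(1) one by (simp add: shift_up_def sum_image_Suc)
  moreover have "int (\<Sum>(snd (shift_up (A, B)))) = int (\<Sum>B) - int (card B) + (if 0 \<in> B then 1 else 0)"
    using sum_image_pred[OF _ B0] fin(2) card sum
    by (simp add: shift_up_def del: of_nat_sum card_Diff_singleton split: if_splits)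
  ultimately show "int (energy (shift_up (A, B))) = int (energy (A, B)) + charge (A, B) + 1"
    by (simp add: energy_def charge_def del: of_nat_sum split: if_splits)
  show "shift_down (shift_up (A, B)) = (A, B)"
    using Suc_image_pred[OF _ B0] fin one by (auto simp: shift_down_def shift_up_def image_image)
qed

lemma shift_down_iter:
  assumes "P \<in> fermion_states"
  shows "(shift_down ^^ j) P \<in> fermion_states \<and> charge ((shift_down ^^ j) P) = charge P - int j \<and>
    2 * int (energy ((shift_down ^^ j) P)) = 2 * int (energy P) - 2 * int j * charge P + int j * (int j - 1) \<and>
    (shift_up ^^ j) ((shift_down ^^ j) P) = P"
proof (induction j)
  case 0
  show ?case using assms by simp
next
  case (Suc j)
  obtain A B where AB: "(shift_down ^^ j) P = (A, B)" by fastforce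
  have Q: "(A, B) \<in> fermion_states" using Suc.IH by (simp add: AB)
  have "(shift_up ^^ Suc j) X = (shift_up ^^ j) (shift_up X)" for X
    by (simp only: funpow_Suc_right comp_def)
  then have "(shift_up ^^ Suc j) ((shift_down ^^ Suc j) P) = (shift_up ^^ j) (shift_up (shift_down (A, B)))"
    by (simp add: AB)
  then show ?case
    using Suc.IH shift_down_props[OF Q] by (simp add: AB algebra_simps)
qed

lemma shift_up_iter:
  assumes "P \<in> fermion_states"
  shows "(shift_up ^^ j) P \<in> fermion_states \<and> charge ((shift_up ^^ j) P) = charge P + int j \<and>
    2 * int (energy ((shift_up ^^ j) P)) = 2 * int (energy P) + 2 * int j * charge P + int j * (int j + 1) \<and>
    (shift_down ^^ j) ((shift_up ^^ j) P) = P"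
proof (induction j)
  case 0
  show ?case using assms by simp
next
  case (Suc j)
  obtain A B where AB: "(shift_up ^^ j) P = (A, B)" by fastforce
  have Q: "(A, B) \<in> fermion_states" using Suc.IH by (simp add: AB)
  have "(shift_down ^^ Suc j) X = (shift_down ^^ j) (shift_down X)" for X
    by (simp only: funpow_Suc_right comp_def)
  then have "(shift_down ^^ Suc j) ((shift_up ^^ Suc j) P) = (shift_down ^^ j) (shift_down (shift_up (A, B)))"
    by (simp add: AB)
  then show ?case
    using Suc.IH shift_up_props[OF Q] by (simp add: AB algebra_simps)
qed

definition shift :: "int \<Rightarrow> nat set \<times> nat set \<Rightarrow> nat set \<times> nat set" where
  "shift k = (if k \<ge> 0 then shift_up ^^ nat k else shift_down ^^ nat (- k))"

lemma shift_props:
  assumes "P \<in> fermion_states"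
  shows "shift k P \<in> fermion_states \<and> charge (shift k P) = charge P + k \<and>
    2 * int (energy (shift k P)) = 2 * int (energy P) + 2 * k * charge P + k * (k + 1) \<and>
    shift (- k) (shift k P) = P"
proof -
  consider "k = 0" | "k > 0" | "k < 0" by linarith
  then show ?thesis
  proof cases
    case 1
    then show ?thesis using assms by (simp add: shift_def)
  next
    case 2
    then show ?thesis using shift_up_iter[OF assms, of "nat k"] by (simp add: shift_def)
  next
    case 3
    then show ?thesis using shift_down_iter[OF assms, of "nat (- k)"] by (simp add: shift_def algebra_simps)
  qed
qed

definition neutral_states :: "(nat set \<times> nat set) set" where
  "neutral_states = {P \<in> fermion_states. charge P = 0}"

lemma bij_betw_charge_shift:
  "bij_betw (\<lambda>P. (charge P, shift (- charge P) P)) fermion_states (UNIV \<times> neutral_states)"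
proof (rule bij_betw_byWitness[where f' = "\<lambda>(k, Q). shift k Q"])
  show "\<forall>P\<in>fermion_states. (\<lambda>(k, Q). shift k Q) (charge P, shift (- charge P) P) = P"
    using shift_props[of _ "- charge _"] by simp
qed (auto simp: neutral_states_def shift_props)

definition tri :: "int \<Rightarrow> int" where
  "tri k = k * (k + 1) div 2"

lemma two_mult_tri: "2 * tri k = k * (k + 1)"
  by (simp add: tri_def)

lemma energy_eq_neutral_energy_add_tri:
  assumes "P \<in> fermion_states"
  shows "int (energy P) = int (energy (shift (- charge P) P)) + tri (charge P)"
  using shift_props[OF assms, of "- charge P"] two_mult_tri[of "charge P"]
  by (simp add: algebra_simps)

lemma tri_bound:
  fixes c a k :: int
  assumes "a < 0" "c + a > 0"
  shows "\<bar>k\<bar> \<le> c * tri k + a * k"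
proof -
  have c: "c \<ge> 1" using assms by linarith
  have e: "2 * (c * tri k + a * k) = c * (k * (k + 1)) + 2 * a * k"
    using two_mult_tri[of k] by (simp add: algebra_simps)
  show ?thesis
  proof (cases "k \<ge> 1")
    case True
    have "k * (k - 1) \<ge> 0" using True by simp
    then have "k * (k + 1) \<ge> 2 * k" by (simp add: algebra_simps)
    then have "c * (k * (k + 1)) \<ge> c * (2 * k)" using c by (intro mult_left_mono) auto
    moreover have "(c + a) * k \<ge> 1 * k" using assms(2) True by (intro mult_right_mono) auto
    ultimately have "2 * (c * tri k + a * k) \<ge> 2 * k" using e by (simp add: algebra_simps)
    then show ?thesis using True by simp
  next
    case False
    then have k: "k \<le> 0" by simp
    have "k * (k + 1) \<ge> 0"
    proof (cases "k = 0")
      case False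
      then have "k + 1 \<le> 0" using k by simp
      then show ?thesis using k by (simp add: mult_nonpos_nonpos)
    qed simp
    then have "c * (k * (k + 1)) \<ge> 0" using c by simp
    moreover have "(- a) * (- k) \<ge> 1 * (- k)" using assms(1) k by (intro mult_right_mono) auto
    ultimately have "2 * (c * tri k + a * k) \<ge> 2 * (- k)" using e by (simp add: algebra_simps)
    then show ?thesis using k by simp
  qed
qed

definition theta_gf :: "int \<Rightarrow> int \<Rightarrow> bit fps" where
  "theta_gf c a = gf UNIV (\<lambda>k::int. nat (c * tri k + a * k))"

lemma finite_fibres_theta:
  assumes "a < 0" "c + a > 0"
  shows "finite_fibres UNIV (\<lambda>k::int. nat (c * tri k + a * k))"
  unfolding finite_fibres_def
proof
  fix n
  have "{k \<in> UNIV. nat (c * tri k + a * k) = n} \<subseteq> {- int n..int n}"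
  proof
    fix k assume "k \<in> {k \<in> UNIV. nat (c * tri k + a * k) = n}"
    then show "k \<in> {- int n..int n}" using tri_bound[OF assms, of k] by auto
  qed
  then show "finite {k \<in> UNIV. nat (c * tri k + a * k) = n}"
    by (rule finite_subset) simp
qed

lemma finite_fibres_neutral_states: "finite_fibres neutral_states energy"
proof -
  have "finite_fibres (Fpow UNIV \<times> Fpow UNIV) (\<lambda>(S, T). \<Sum>S + \<Sum>T)"
    by (rule finite_fibres_Times[OF finite_fibres_Fpow finite_fibres_Fpow])
  moreover have "(\<lambda>(S, T). \<Sum>S + \<Sum>T) = energy"
    by (auto simp: energy_def)
  moreover have "neutral_states \<subseteq> Fpow UNIV \<times> Fpow UNIV"
    by (auto simp: neutral_states_def fermion_states_def Fpow_def)
  ultimately show ?thesis using finite_fibres_subset by metis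
qed

definition progression :: "int \<Rightarrow> int \<Rightarrow> nat set \<Rightarrow> nat set" where
  "progression c a N = {m. \<exists>n\<in>N. int m = c * int n + a}"

lemma
  assumes "c > 0" "\<And>n. n \<in> N \<Longrightarrow> c * int n + a \<ge> 0"
  shows bij_betw_progression: "bij_betw (\<lambda>n. nat (c * int n + a)) N (progression c a N)"
    and sum_image_progression: "S \<subseteq> N \<Longrightarrow> finite S \<Longrightarrow>
      int (\<Sum>((\<lambda>n. nat (c * int n + a)) ` S)) = c * int (\<Sum>S) + a * int (card S)"
proof -
  have inj: "inj_on (\<lambda>n. nat (c * int n + a)) N"
  proof (rule inj_onI)
    fix m n assume "m \<in> N" "n \<in> N" "nat (c * int m + a) = nat (c * int n + a)"
    then have "c * int m = c * int n" using assms(2) by (simp add: eq_nat_nat_iff)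
    then show "m = n" using assms(1) by simp
  qed
  moreover have "(\<lambda>n. nat (c * int n + a)) ` N = progression c a N"
    using assms(2) by (force simp: progression_def)
  ultimately show "bij_betw (\<lambda>n. nat (c * int n + a)) N (progression c a N)"
    by (simp add: bij_betw_def)
  assume S: "S \<subseteq> N" "finite S"
  have "int (\<Sum>((\<lambda>n. nat (c * int n + a)) ` S)) = (\<Sum>n\<in>S. int (nat (c * int n + a)))"
    using sum.reindex[OF inj_on_subset[OF inj S(1)], of int] by (simp add: of_nat_sum)
  also have "\<dots> = (\<Sum>n\<in>S. c * int n + a)"
    using S(1) assms(2) by (intro sum.cong) auto
  also have "\<dots> = c * int (\<Sum>S) + a * int (card S)"
    by (simp add: sum.distrib sum_distrib_left of_nat_sum)
  finally show "int (\<Sum>((\<lambda>n. nat (c * int n + a)) ` S)) = c * int (\<Sum>S) + a * int (card S)" .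
qed

(* The maps n \<mapsto> c n + a and n \<mapsto> c n - a turn the occupied levels and the holes of a state
   into parts. *)
lemma distinct_gf_progressions_eq_gf_fermion_states:
  assumes "a < 0" "c + a > 0"
  shows "distinct_gf (progression c a {0<..}) * distinct_gf (progression c (- a) UNIV) =
    gf fermion_states (\<lambda>P. nat (c * int (energy P) + a * charge P))"
proof -
  let ?f = "\<lambda>n. nat (c * int n + a)" and ?g = "\<lambda>n. nat (c * int n + - a)"
  have c: "c > 0" using assms by linarith
  have f: "c * int n + a \<ge> 0" if "n \<in> {0<..}" for n
  proof -
    have "c * int n \<ge> c * 1" using that c by (intro mult_left_mono) auto
    then show ?thesis using assms(2) by simp
  qed
  have g: "c * int n + - a \<ge> 0" if "n \<in> UNIV" for n
  proof -
    have "c * int n \<ge> 0" using c by simp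
    then show ?thesis using assms(1) by simp
  qed
  have "distinct_gf (progression c a {0<..}) * distinct_gf (progression c (- a) UNIV) =
      gf (Fpow (progression c a {0<..}) \<times> Fpow (progression c (- a) UNIV)) (\<lambda>(S, T). \<Sum>S + \<Sum>T)"
    unfolding distinct_gf_def by (rule gf_Times[OF finite_fibres_Fpow finite_fibres_Fpow])
  also have "\<dots> = gf fermion_states (\<lambda>P. nat (c * int (energy P) + a * charge P))"
  proof (rule sym, rule gf_bij_betw)
    show "bij_betw (map_prod (image ?f) (image ?g)) fermion_states
        (Fpow (progression c a {0<..}) \<times> Fpow (progression c (- a) UNIV))"
      unfolding fermion_states_def
      by (intro bij_betw_map_prod bij_betw_image_Fpow bij_betw_progression[OF c] f g)
    fix P assume "P \<in> fermion_states"
    then obtain A B where P: "P = (A, B)" "A \<subseteq> {0<..}" "finite A" "finite B"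
      by (auto simp: fermion_states_def Fpow_def)
    have "int (\<Sum>(?f ` A) + \<Sum>(?g ` B)) = c * int (energy P) + a * charge P"
      using sum_image_progression[OF c f P(2,3)] sum_image_progression[OF c g subset_UNIV P(4)]
      by (simp add: P energy_def charge_def algebra_simps)
    then have "\<Sum>(?f ` A) + \<Sum>(?g ` B) = nat (c * int (energy P) + a * charge P)"
      by (metis nat_int)
    then show "(\<lambda>(S, T). \<Sum>S + \<Sum>T) (map_prod (image ?f) (image ?g) P) =
        nat (c * int (energy P) + a * charge P)"
      by (simp add: P)
  qed
  finally show ?thesis .
qed

(* Moving a state to charge 0 splits off its charge, which contributes the theta factor. *)
lemma gf_fermion_states_eq_theta_mult:
  assumes "a < 0" "c + a > 0"
  shows "gf fermion_states (\<lambda>P. nat (c * int (energy P) + a * charge P)) =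
    theta_gf c a * gf neutral_states (\<lambda>P. nat c * energy P)"
proof -
  have c: "c > 0" using assms by linarith
  have "gf fermion_states (\<lambda>P. nat (c * int (energy P) + a * charge P)) =
      gf (UNIV \<times> neutral_states) (\<lambda>(k, Q). nat (c * tri k + a * k) + nat c * energy Q)"
  proof (rule gf_bij_betw[OF bij_betw_charge_shift])
    fix P assume P: "P \<in> fermion_states"
    define k where "k = charge P"
    define E where "E = energy (shift (- k) P)"
    have "int (energy P) = int E + tri k"
      unfolding E_def k_def by (rule energy_eq_neutral_energy_add_tri[OF P])
    moreover have "c * tri k + a * k \<ge> 0"
      using tri_bound[OF assms, of k] by linarith
    ultimately have "int (nat (c * tri k + a * k) + nat c * E) = c * int (energy P) + a * k"
      using c by (simp add: algebra_simps)
    then have "nat (c * tri k + a * k) + nat c * E = nat (c * int (energy P) + a * k)"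
      by (metis nat_int)
    then show "(\<lambda>(k, Q). nat (c * tri k + a * k) + nat c * energy Q) (charge P, shift (- charge P) P)
        = nat (c * int (energy P) + a * charge P)"
      by (simp add: k_def E_def)
  qed
  also have "\<dots> = theta_gf c a * gf neutral_states (\<lambda>P. nat c * energy P)"
    unfolding theta_gf_def
    by (rule sym, rule gf_Times[OF finite_fibres_theta[OF assms]
          finite_fibres_mult[OF finite_fibres_neutral_states]]) (use c in simp)
  finally show ?thesis .
qed

theorem jacobi_triple_product_mod_2:
  assumes "a < 0" "c + a > 0"
  shows "distinct_gf (progression c a {0<..}) * distinct_gf (progression c (- a) UNIV) =
    theta_gf c a * gf neutral_states (\<lambda>P. nat c * energy P)"
  using distinct_gf_progressions_eq_gf_fermion_states[OF assms]
    gf_fermion_states_eq_theta_mult[OF assms] by simp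

section \<open>Euler's product modulo 2\<close>

lemma mem_progression_pos:
  "m \<in> progression c a {0<..} \<longleftrightarrow> (\<exists>n::nat. 0 < n \<and> int m = c * int n + a)"
  by (auto simp: progression_def)

lemma mem_progression_UNIV:
  "m \<in> progression c a UNIV \<longleftrightarrow> (\<exists>n::nat. int m = c * int n + a)"
  by (auto simp: progression_def)

lemma mem_image_mult_pos: "(k::nat) > 0 \<Longrightarrow> m \<in> (*) k ` {0<..} \<longleftrightarrow> k dvd m \<and> 0 < m"
  by (auto simp: image_iff dvd_def)

lemma pos_eq_odd_Un_double:
  shows "{0::nat<..} = {n. odd n} \<union> (*) 2 ` {0<..}"
    and "{n::nat. odd n} \<inter> (*) 2 ` {0<..} = {}"
proof -
  have two: "m \<in> (*) 2 ` {0<..} \<longleftrightarrow> even m \<and> 0 < m" for m :: nat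
    using mem_image_mult_pos[of 2 m] by simp
  show "{0::nat<..} = {n. odd n} \<union> (*) 2 ` {0<..}" "{n::nat. odd n} \<inter> (*) 2 ` {0<..} = {}"
    unfolding set_eq_iff Un_iff Int_iff two greaterThan_iff mem_Collect_eq empty_iff by presburger+
qed

lemma theta_gf_squares: "theta_gf 2 (-1) = 1"
proof -
  have square: "nat (2 * tri k + - 1 * k) = nat (k * k)" for k
    using two_mult_tri[of k] by (simp add: algebra_simps)
  have "theta_gf 2 (-1) = gf {()} (\<lambda>_. 0)"
    unfolding theta_gf_def bit_gf_eq_iff
  proof
    fix n
    let ?F = "{k \<in> UNIV. nat (2 * tri k + - 1 * k) = n}"
    have "finite ?F"
      using finite_fibres_theta[of "-1" 2] unfolding finite_fibres_def by simp
    then have "even (card ?F) \<longleftrightarrow> even (card {k\<in>?F. - k = k})"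
      by (rule even_card_iff_even_card_fixpoints) (use square in simp_all)
    also have "{k\<in>?F. - k = k} = (if n = 0 then {0} else {})"
      using square[of 0] by auto
    finally show "even (card ?F) \<longleftrightarrow> even (card {u \<in> {()}. 0 = n})" by simp
  qed
  then show ?thesis by (simp add: gf_unit)
qed

(* Read off from the case c = 2, a = -1 of the triple product, where theta is 1. *)
lemma gf_neutral_states:
  assumes "k > 0"
  shows "gf neutral_states (\<lambda>P. k * energy P) = distinct_gf ((*) k ` {n. odd n})"
proof -
  have "progression 2 (-1) {0<..} = {n. odd n}" "progression 2 1 UNIV = {n. odd n}"
    unfolding set_eq_iff mem_progression_pos mem_progression_UNIV mem_Collect_eq by presburger+
  then have "distinct_gf {n. odd n} * distinct_gf {n. odd n} = gf neutral_states (\<lambda>P. 2 * energy P)"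
    using jacobi_triple_product_mod_2[of "-1" 2, simplified] by (simp add: theta_gf_squares)
  then have "gf (Fpow {n. odd n}) (\<lambda>S. 2 * \<Sum>S) = (gf neutral_states (\<lambda>P. 2 * energy P) :: bit fps)"
    by (simp add: distinct_gf_square distinct_gf_image_mult)
  then have "gf (Fpow {n. odd n}) (\<lambda>S. k * \<Sum>S) = (gf neutral_states (\<lambda>P. k * energy P) :: bit fps)"
    by (simp add: gf_mult_eq_iff[of 2] gf_mult_eq_iff[OF assms])
  then show ?thesis by (simp add: distinct_gf_image_mult[OF assms])
qed

lemma distinct_gf_odd_mult_distinct_gf_pos:
  assumes "(c::nat) > 0"
  shows "distinct_gf ((*) c ` {n. odd n}) * distinct_gf ((*) c ` {0<..}) = 1"
proof -
  let ?G = "distinct_gf ((*) c ` {0<..})" and ?O = "distinct_gf ((*) c ` {n. odd n})"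
  have "(*) c ` {0<..} = (*) c ` ({n. odd n} \<union> (*) 2 ` {0<..})"
    using pos_eq_odd_Un_double(1) by (rule arg_cong)
  also have "\<dots> = (*) c ` {n. odd n} \<union> (*) 2 ` (*) c ` {0<..}"
    by (simp add: image_Un image_image mult.left_commute)
  finally have split: "(*) c ` {0<..} = (*) c ` {n. odd n} \<union> (*) 2 ` (*) c ` {0<..}" .
  have "inj ((*) c)" using assms by (auto intro: injI)
  then have "(*) c ` {n. odd n} \<inter> (*) c ` (*) 2 ` {0<..} = {}"
    using pos_eq_odd_Un_double(2) by (simp add: image_Int[symmetric])
  then have disjoint: "(*) c ` {n. odd n} \<inter> (*) 2 ` (*) c ` {0<..} = {}"
    by (simp add: image_image mult.left_commute)
  have "?G = ?O * ?G * ?G"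
    using distinct_gf_Un[OF disjoint] by (simp add: split[symmetric] distinct_gf_square[symmetric] mult.assoc)
  moreover have "?G \<noteq> 0"
    using assms by (intro distinct_gf_nonzero) auto
  ultimately show ?thesis by simp
qed

lemma distinct_gf_pos_eq_theta: "distinct_gf {0<..} = theta_gf 3 (-1)"
proof -
  let ?A = "progression 3 (-1) {0<..}" and ?B = "progression 3 1 UNIV"
  have AB: "?A \<inter> ?B = {}"
    unfolding set_eq_iff Int_iff mem_progression_pos mem_progression_UNIV empty_iff by presburger
  have pos: "{0<..} = (?A \<union> ?B) \<union> (*) 3 ` {0<..}" "(?A \<union> ?B) \<inter> (*) 3 ` {0<..} = {}"
    unfolding set_eq_iff Un_iff Int_iff mem_progression_pos mem_progression_UNIV
      mem_image_mult_pos[of 3, simplified] greaterThan_iff empty_iff by presburger+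
  have "distinct_gf {0<..} = distinct_gf ?A * distinct_gf ?B * distinct_gf ((*) 3 ` {0<..})"
    using arg_cong[OF pos(1), of distinct_gf] by (simp only: distinct_gf_Un[OF pos(2)] distinct_gf_Un[OF AB])
  also have "\<dots> = theta_gf 3 (-1) * (distinct_gf ((*) 3 ` {n. odd n}) * distinct_gf ((*) 3 ` {0<..}))"
    using jacobi_triple_product_mod_2[of "-1" 3, simplified] gf_neutral_states[of 3]
    by (simp add: mult.assoc)
  finally show ?thesis by (simp add: distinct_gf_odd_mult_distinct_gf_pos)
qed

lemma distinct_gf_pos_cube_eq_theta: "distinct_gf {0<..} ^ 3 = theta_gf 4 (-3)"
proof -
  let ?E = "distinct_gf {0<..}"
  let ?A = "progression 4 (-3) {0<..}" and ?B = "progression 4 3 UNIV"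
  have odd: "{n. odd n} = ?A \<union> ?B" "?A \<inter> ?B = {}"
    unfolding set_eq_iff Un_iff Int_iff mem_progression_pos mem_progression_UNIV
      mem_Collect_eq empty_iff by presburger+
  have square: "?E ^ 2 = distinct_gf ((*) 2 ` {0<..})" and fourth: "?E ^ 4 = distinct_gf ((*) 4 ` {0<..})"
    using distinct_gf_power_two_pow[of "{0<..}" 1] distinct_gf_power_two_pow[of "{0<..}" 2] by simp_all
  have "?E = distinct_gf ({n. odd n} \<union> (*) 2 ` {0<..})"
    using pos_eq_odd_Un_double(1) by (rule arg_cong)
  also have "\<dots> = distinct_gf {n. odd n} * ?E ^ 2"
    by (simp only: distinct_gf_Un[OF pos_eq_odd_Un_double(2)] square)
  finally have E: "?E = distinct_gf {n. odd n} * ?E ^ 2" .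
  have "?E ^ 3 = ?E * ?E ^ 2"
    by (simp only: power3_eq_cube power2_eq_square mult.assoc)
  also have "\<dots> = distinct_gf {n. odd n} * (?E ^ 2 * ?E ^ 2)"
    using arg_cong[OF E, of "\<lambda>x. x * ?E ^ 2"] by (simp only: mult.assoc)
  also have "?E ^ 2 * ?E ^ 2 = ?E ^ 4"
    by (simp add: power_add[symmetric])
  also have "distinct_gf {n. odd n} = theta_gf 4 (-3) * distinct_gf ((*) 4 ` {n. odd n})"
    using jacobi_triple_product_mod_2[of "-3" 4, simplified] gf_neutral_states[of 4]
    by (simp add: odd(1) distinct_gf_Un[OF odd(2)])
  finally show ?thesis
    by (simp add: fourth mult.assoc distinct_gf_odd_mult_distinct_gf_pos)
qed

lemma partition_gf_eq_distinct_gf_pos_pow_7: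
  "partition_gf {n. 0 < n \<and> \<not> 8 dvd n} = distinct_gf {0<..} ^ 7"
proof -
  let ?E = "distinct_gf {0<..}" and ?I = "{n::nat. 0 < n \<and> \<not> 8 dvd n}"
  have pos: "{0<..} = ?I \<union> (*) 8 ` {0<..}" "?I \<inter> (*) 8 ` {0<..} = {}"
    unfolding set_eq_iff Un_iff Int_iff mem_image_mult_pos[of 8, simplified] greaterThan_iff
      mem_Collect_eq empty_iff by presburger+
  have "?E = distinct_gf (?I \<union> (*) 8 ` {0<..})"
    using pos(1) by (rule arg_cong)
  also have "\<dots> = distinct_gf ?I * ?E ^ 8"
    using distinct_gf_power_two_pow[of "{0<..}" 3] by (simp add: distinct_gf_Un[OF pos(2)])
  finally have E: "?E = distinct_gf ?I * ?E ^ 8" .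
  have "partition_gf ?I * ?E = (partition_gf ?I * distinct_gf ?I) * ?E ^ 8"
    using arg_cong[OF E, of "\<lambda>x. partition_gf ?I * x"] by (simp only: mult.assoc)
  also have "\<dots> = ?E ^ 8"
    using partition_gf_mult_distinct_gf[of ?I] by simp
  also have "\<dots> = ?E ^ 7 * ?E"
    by (simp add: power_Suc2[symmetric])
  finally show ?thesis
    using distinct_gf_nonzero[of "{0<..}"] by simp
qed

lemma distinct_gf_pos_pow_7:
  "distinct_gf {0<..} ^ 7 =
    gf (UNIV \<times> UNIV) (\<lambda>(k, l::int). nat (4 * tri k + - 3 * k) + 4 * nat (3 * tri l + - 1 * l))"
proof -
  have "gf (Fpow {0<..}) (\<lambda>S. \<Sum>S) = (gf UNIV (\<lambda>l::int. nat (3 * tri l + - 1 * l)) :: bit fps)"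
    using distinct_gf_pos_eq_theta by (simp add: distinct_gf_def theta_gf_def)
  then have "distinct_gf {0<..} ^ 4 = gf UNIV (\<lambda>l::int. 4 * nat (3 * tri l + - 1 * l))"
    using distinct_gf_power_two_pow[of "{0<..}" 2] distinct_gf_image_mult[of 4 "{0<..}"]
    by (simp add: gf_mult_eq_iff)
  moreover have "distinct_gf {0<..} ^ 7 = distinct_gf {0<..} ^ 3 * distinct_gf {0<..} ^ 4"
    by (simp add: power_add[symmetric])
  ultimately have "distinct_gf {0<..} ^ 7 =
      theta_gf 4 (-3) * gf UNIV (\<lambda>l::int. 4 * nat (3 * tri l + - 1 * l))"
    by (simp add: distinct_gf_pos_cube_eq_theta)
  also have "\<dots> = gf (UNIV \<times> UNIV)
      (\<lambda>(k, l::int). nat (4 * tri k + - 3 * k) + 4 * nat (3 * tri l + - 1 * l))"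
    unfolding theta_gf_def
    by (rule gf_Times[OF finite_fibres_theta finite_fibres_mult[OF finite_fibres_theta]]) simp_all
  finally show ?thesis .
qed

lemma odd_b8_imp_sum_of_squares:
  assumes "odd (b 8 m)"
  shows "\<exists>X Y :: int. 24 * int m + 7 = 3 * X\<^sup>2 + 4 * Y\<^sup>2"
proof -
  let ?F = "{p \<in> (UNIV :: int set) \<times> (UNIV :: int set).
    (\<lambda>(k, l). nat (4 * tri k + - 3 * k) + 4 * nat (3 * tri l + - 1 * l)) p = m}"
  have "{M. set_mset M \<subseteq> {n. 0 < n \<and> \<not> 8 dvd n} \<and> sum_mset M = m} =
      {M. (\<forall>x\<in>#M. 0 < x \<and> \<not> 8 dvd x) \<and> sum_mset M = m}"
    by auto
  then have "(of_nat (b 8 m) :: bit) = of_nat (card ?F)"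
    using arg_cong[OF partition_gf_eq_distinct_gf_pos_pow_7, of "\<lambda>F. F $ m"]
    by (simp only: partition_gf_def distinct_gf_pos_pow_7 gf_nth b_def mem_Collect_eq)
  then have "odd (card ?F)"
    using assms by (simp add: of_nat_bit_eq_iff)
  then have "?F \<noteq> {}"
    by (metis card.empty dvd_0_right)
  then obtain k l :: int where kl: "nat (4 * tri k + - 3 * k) + 4 * nat (3 * tri l + - 1 * l) = m"
    by auto
  have "4 * tri k + - 3 * k \<ge> 0" "3 * tri l + - 1 * l \<ge> 0"
    using tri_bound[of "-3" 4 k] tri_bound[of "-1" 3 l] by linarith+
  then have "int m = 4 * tri k - 3 * k + 4 * (3 * tri l - l)"
    using kl by auto
  then have "24 * int m + 7 = 3 * (4 * k - 1)\<^sup>2 + 4 * (6 * l + 1)\<^sup>2"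
    using two_mult_tri[of k] two_mult_tri[of l] by (simp add: power2_eq_square algebra_simps)
  then show ?thesis by blast
qed

section \<open>The quadratic form 3 X^2 + 4 Y^2\<close>

lemma int_fermat:
  fixes p :: nat and T :: int
  assumes "prime p" "\<not> int p dvd T"
  shows "[T ^ (p - 1) = 1] (mod int p)"
proof -
  have "residues (int p)"
    using prime_gt_1_nat[OF assms(1)] by (simp add: residues_def)
  moreover have "coprime (int p) T"
    using assms by (intro prime_imp_coprime) simp_all
  ultimately show ?thesis
    using residues.euler_theorem[of "int p" T] totient_prime[OF assms(1)]
    by (simp add: coprime_commute)
qed

lemma cong_cube_imp_cong:
  fixes p :: nat and T D :: int
  assumes p: "prime p" "p mod 3 = 2" and nT: "\<not> int p dvd T" and nD: "\<not> int p dvd D"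
    and c3: "[T ^ 3 = D ^ 3] (mod int p)"
  shows "[T = D] (mod int p)"
proof -
  let ?P = "int p"
  obtain q where q: "p - 1 = 3 * q + 1"
  proof
    show "p - 1 = 3 * ((p - 1) div 3) + 1" using p(2) by presburger
  qed
  \<comment> \<open>By Fermat, (D^3)^q is an inverse of both T and D modulo p.\<close>
  have eT: "T ^ (p - 1) = (T ^ 3) ^ q * T" and eD: "D ^ (p - 1) = (D ^ 3) ^ q * D"
    unfolding q by (simp_all add: power_mult[symmetric] power_add)
  have "[(T ^ 3) ^ q * T = (D ^ 3) ^ q * T] (mod ?P)"
    by (intro cong_mult cong_pow c3 cong_refl)
  then have "[(D ^ 3) ^ q * T = 1] (mod ?P)"
    using int_fermat[OF p(1) nT] eT by (metis cong_sym cong_trans)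
  moreover have "[(D ^ 3) ^ q * D = 1] (mod ?P)"
    using int_fermat[OF p(1) nD] eD by simp
  ultimately have "[(D ^ 3) ^ q * T = (D ^ 3) ^ q * D] (mod ?P)"
    by (metis cong_sym cong_trans)
  moreover have "coprime ((D ^ 3) ^ q) ?P"
    using prime_imp_coprime[OF _ nD] p(1) by (simp add: coprime_commute)
  ultimately show ?thesis by (simp add: cong_mult_lcancel)
qed

lemma dvd_eisenstein_norm_imp_dvd:
  fixes p :: nat and T D :: int
  assumes p: "prime p" "p mod 3 = 2" and h: "int p dvd T\<^sup>2 + T * D + D\<^sup>2"
  shows "int p dvd D"
proof (rule ccontr)
  assume nD: "\<not> int p dvd D"
  let ?P = "int p"
  have pP: "prime ?P" using p(1) by simp
  have nT: "\<not> ?P dvd T"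
  proof
    assume "?P dvd T"
    then have "?P dvd T\<^sup>2 + T * D" by (simp add: power2_eq_square)
    then have "?P dvd D\<^sup>2" using h by (metis add_diff_cancel_left' dvd_diff)
    then show False using nD pP prime_dvd_power by blast
  qed
  have "T ^ 3 - D ^ 3 = (T - D) * (T\<^sup>2 + T * D + D\<^sup>2)"
    by (simp add: algebra_simps power2_eq_square power3_eq_cube)
  then have "[T ^ 3 = D ^ 3] (mod ?P)" using h by (simp add: cong_iff_dvd_diff)
  then have "?P dvd T - D"
    using cong_cube_imp_cong[OF p nT nD] by (simp add: cong_iff_dvd_diff)
  then have "?P dvd (T\<^sup>2 + T * D + D\<^sup>2) - (T - D) * (T + 2 * D)"
    by (rule dvd_diff[OF h dvd_mult2])
  also have "(T\<^sup>2 + T * D + D\<^sup>2) - (T - D) * (T + 2 * D) = 3 * D\<^sup>2"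
    by (simp add: algebra_simps power2_eq_square)
  finally have "?P dvd 3 \<or> ?P dvd D\<^sup>2"
    using pP prime_dvd_mult_iff by blast
  moreover have "\<not> ?P dvd D\<^sup>2" using nD pP prime_dvd_power by blast
  ultimately have "p dvd 3" by presburger
  then show False using p prime_nat_iff[of 3] by auto
qed

lemma dvd_three_sq_add_four_sq_imp_dvd:
  fixes p :: nat and X Y :: int
  assumes p: "prime p" "p mod 6 = 5" and h: "int p dvd 3 * X\<^sup>2 + 4 * Y\<^sup>2"
  shows "int p dvd X" "int p dvd Y"
proof -
  let ?P = "int p"
  have pP: "prime ?P" using p(1) by simp
  have p3: "p mod 3 = 2" using p(2) by presburger
  have small: "\<not> ?P dvd 2" "\<not> ?P dvd 3"
  proof -
    have "p \<noteq> 1" "p \<noteq> 2" "p \<noteq> 3" using p by auto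
    moreover have "p dvd 2 \<Longrightarrow> p = 1 \<or> p = 2" "p dvd 3 \<Longrightarrow> p = 1 \<or> p = 3"
      using prime_nat_iff[of 2] prime_nat_iff[of 3] by auto
    ultimately show "\<not> ?P dvd 2" "\<not> ?P dvd 3" by presburger+
  qed
  \<comment> \<open>3 (3 X^2 + 4 Y^2) is the norm form T^2 + T D + D^2 at T = 3X - 2Y, D = 4Y.\<close>
  have norm: "(3 * X - 2 * Y)\<^sup>2 + (3 * X - 2 * Y) * (4 * Y) + (4 * Y)\<^sup>2 = 3 * (3 * X\<^sup>2 + 4 * Y\<^sup>2)"
    by (simp add: algebra_simps power2_eq_square)
  have "?P dvd (3 * X - 2 * Y)\<^sup>2 + (3 * X - 2 * Y) * (4 * Y) + (4 * Y)\<^sup>2"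
    unfolding norm by (rule dvd_mult[OF h])
  then have "?P dvd 4 * Y"
    by (rule dvd_eisenstein_norm_imp_dvd[OF p(1) p3])
  then have "?P dvd 2 * (2 * Y)" by simp
  then have "?P dvd 2 * Y" using small(1) pP prime_dvd_mult_iff by blast
  then show Y: "?P dvd Y" using small(1) pP prime_dvd_mult_iff by blast
  then have "?P dvd 4 * Y\<^sup>2" by (simp add: power2_eq_square)
  then have "?P dvd 3 * X\<^sup>2" using h by (metis dvd_add_left_iff)
  then have "?P dvd X\<^sup>2" using small(2) pP prime_dvd_mult_iff by blast
  then show "?P dvd X" using pP prime_dvd_power by blast
qed

lemma three_sq_add_four_sq_factor:
  fixes p :: nat and X Y :: int
  assumes "prime p" "p mod 6 = 5" "int p dvd 3 * X\<^sup>2 + 4 * Y\<^sup>2"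
  obtains X' Y' where "3 * X\<^sup>2 + 4 * Y\<^sup>2 = int p ^ 2 * (3 * X'\<^sup>2 + 4 * Y'\<^sup>2)"
proof -
  obtain X' Y' where "X = int p * X'" "Y = int p * Y'"
    using dvd_three_sq_add_four_sq_imp_dvd[OF assms] by (auto elim!: dvdE)
  then show thesis by (intro that[of X' Y']) (simp add: algebra_simps power2_eq_square)
qed

lemma three_sq_add_four_sq_neq:
  fixes p :: nat and Q :: int
  assumes p: "prime p" "p mod 6 = 5" and nQ: "\<not> int p dvd Q"
  shows "3 * X\<^sup>2 + 4 * Y\<^sup>2 \<noteq> int p ^ (2 * e + 1) * Q"
proof (induction e arbitrary: X Y)
  case 0
  show ?case
  proof
    assume h: "3 * X\<^sup>2 + 4 * Y\<^sup>2 = int p ^ (2 * 0 + 1) * Q"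
    then have "int p dvd 3 * X\<^sup>2 + 4 * Y\<^sup>2" by simp
    then obtain X' Y' where "3 * X\<^sup>2 + 4 * Y\<^sup>2 = int p ^ 2 * (3 * X'\<^sup>2 + 4 * Y'\<^sup>2)"
      by (rule three_sq_add_four_sq_factor[OF p])
    with h have "int p * Q = int p * (int p * (3 * X'\<^sup>2 + 4 * Y'\<^sup>2))"
      by (simp add: power2_eq_square)
    then have "Q = int p * (3 * X'\<^sup>2 + 4 * Y'\<^sup>2)" using p(1) by (simp add: prime_gt_0_nat)
    then show False using nQ by simp
  qed
next
  case (Suc e)
  show ?case
  proof
    assume h: "3 * X\<^sup>2 + 4 * Y\<^sup>2 = int p ^ (2 * Suc e + 1) * Q"
    then have "int p dvd 3 * X\<^sup>2 + 4 * Y\<^sup>2" by simp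
    then obtain X' Y' where "3 * X\<^sup>2 + 4 * Y\<^sup>2 = int p ^ 2 * (3 * X'\<^sup>2 + 4 * Y'\<^sup>2)"
      by (rule three_sq_add_four_sq_factor[OF p])
    moreover have "2 * Suc e + 1 = 2 + (2 * e + 1)" by simp
    then have "int p ^ (2 * Suc e + 1) * Q = int p ^ 2 * (int p ^ (2 * e + 1) * Q)"
      by (simp only: power_add mult.assoc)
    ultimately have "3 * X'\<^sup>2 + 4 * Y'\<^sup>2 = int p ^ (2 * e + 1) * Q"
      using h p(1) by (simp add: prime_gt_0_nat)
    then show False using Suc.IH by simp
  qed
qed

section \<open>Arithmetic of the index\<close>

lemma power_even_mod_24:
  fixes p :: nat
  assumes "\<not> 2 dvd p" "\<not> 3 dvd p"
  shows "p ^ (2 * k) mod 24 = 1"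
proof -
  have "p mod 24 = 1 \<or> p mod 24 = 5 \<or> p mod 24 = 7 \<or> p mod 24 = 11 \<or>
      p mod 24 = 13 \<or> p mod 24 = 17 \<or> p mod 24 = 19 \<or> p mod 24 = 23"
    using assms by presburger
  then have "(p mod 24)\<^sup>2 mod 24 = 1" by (elim disjE) simp_all
  then have sq: "p\<^sup>2 mod 24 = 1" by (simp add: power_mod)
  have "p ^ (2 * k) mod 24 = ((p\<^sup>2) mod 24) ^ k mod 24"
    by (simp add: power_mult power_mod)
  then show ?thesis by (simp add: sq)
qed

lemma index_mult_24_add_7:
  fixes p \<alpha> n i :: nat
  assumes "\<not> 2 dvd p" "\<not> 3 dvd p" "1 \<le> \<alpha>"
  shows "24 * (p ^ (2 * \<alpha>) * n + ((24 * i + 7 * p) * p ^ (2 * \<alpha> - 1) - 7) div 24) + 7 =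
    p ^ (2 * \<alpha> - 1) * (24 * p * n + 24 * i + 7 * p)"
proof -
  have split: "p ^ (2 * \<alpha>) = p * p ^ (2 * \<alpha> - 1)"
    using assms(3) by (simp add: power_Suc[symmetric])
  define W where "W = (24 * i + 7 * p) * p ^ (2 * \<alpha> - 1)"
  have "W = 24 * (i * p ^ (2 * \<alpha> - 1)) + 7 * p ^ (2 * \<alpha>)"
    unfolding W_def split by (simp add: algebra_simps)
  moreover have "7 * p ^ (2 * \<alpha>) mod 24 = 7 * (p ^ (2 * \<alpha>) mod 24) mod 24"
    by (simp add: mod_mult_right_eq)
  ultimately have "W mod 24 = 7"
    using power_even_mod_24[OF assms(1,2), of \<alpha>] by simp
  then have "24 * ((W - 7) div 24) + 7 = W" by presburger
  then have "24 * (p ^ (2 * \<alpha>) * n + (W - 7) div 24) + 7 = 24 * (p ^ (2 * \<alpha>) * n) + W"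
    by simp
  also have "\<dots> = p ^ (2 * \<alpha> - 1) * (24 * p * n + 24 * i + 7 * p)"
    unfolding W_def split by (simp add: algebra_simps)
  finally show ?thesis by (simp only: W_def)
qed

lemma prime_not_dvd_index_cofactor:
  fixes p n i :: nat
  assumes "prime p" "p > 3" "1 \<le> i" "i < p"
  shows "\<not> p dvd 24 * p * n + 24 * i + 7 * p"
proof
  assume "p dvd 24 * p * n + 24 * i + 7 * p"
  then have "p dvd 24 * i" by (simp add: dvd_add_right_iff mult.assoc)
  then have "p dvd 24 \<or> p dvd i" using assms(1) prime_dvd_mult_iff by blast
  moreover have "\<not> p dvd i"
    using assms(3,4) by (auto dest: dvd_imp_le)
  moreover have "\<not> p dvd 24"
  proof
    assume "p dvd 24"
    then have "p dvd 2 * (2 * (2 * 3))" by simp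
    then have "p dvd 2 \<or> p dvd 3" using assms(1) prime_dvd_mult_iff by blast
    then show False using assms(2) by (auto dest: dvd_imp_le)
  qed
  ultimately show False by simp
qed

theorem theorem3p22:
  fixes p \<alpha> n i :: nat
  assumes "prime p" and "p mod 6 = 5"
    and "1 \<le> \<alpha>" and "1 \<le> i" and "i \<le> p - 1"
  shows "even (b 8 (p ^ (2 * \<alpha>) * n + ((24 * i + 7 * p) * p ^ (2 * \<alpha> - 1) - 7) div 24))"
proof (rule ccontr)
  let ?m = "p ^ (2 * \<alpha>) * n + ((24 * i + 7 * p) * p ^ (2 * \<alpha> - 1) - 7) div 24"
  define Q where "Q = 24 * p * n + 24 * i + 7 * p"
  assume "odd (b 8 ?m)"
  then obtain X Y :: int where XY: "24 * int ?m + 7 = 3 * X\<^sup>2 + 4 * Y\<^sup>2"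
    using odd_b8_imp_sum_of_squares by blast
  have "\<not> 2 dvd p" "\<not> 3 dvd p" "p > 3" using assms(2) by presburger+
  then have "int (24 * ?m + 7) = int (p ^ (2 * \<alpha> - 1) * Q)"
    using index_mult_24_add_7[of p \<alpha> n i] assms(3) by (simp add: Q_def)
  then have "3 * X\<^sup>2 + 4 * Y\<^sup>2 = int p ^ (2 * \<alpha> - 1) * int Q"
    using XY by simp
  also have "2 * \<alpha> - 1 = 2 * (\<alpha> - 1) + 1"
    using assms(3) by simp
  finally have "3 * X\<^sup>2 + 4 * Y\<^sup>2 = int p ^ (2 * (\<alpha> - 1) + 1) * int Q" .
  moreover have "\<not> p dvd Q"
    unfolding Q_def using \<open>p > 3\<close> assms(4,5)
    by (intro prime_not_dvd_index_cofactor[OF assms(1)]) auto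
  ultimately show False
    using three_sq_add_four_sq_neq[OF assms(1,2), of "int Q"] by simp
qed

end
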